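(* Let $\mathcal{P}$ be the PAG over the observed variables $\mathbf{O}$ and let $(X,Y)$ be an ordered pair of target variables. Then $X$ has no causal effect on $Y$ if there exist a subset $\mathbf{Z}\subseteq\mathrm{MB}(X)$ with $\mathbf{Z}\cap\mathrm{PossDe}(X,\mathcal{P})=\emptyset$ and a variable $S\in\mathrm{MB}(X)\setminus(\{Y\}\cup\mathrm{Ch}(X,\mathcal{P}))$ such that at least one of the following holds: (i) $X\perp\!\!\!\perp Y\mid\mathbf{Z}$; or (ii) $S\not\perp\!\!\!\perp X\mid\mathbf{Z}$ and $S\perp\!\!\!\perp Y\mid\mathbf{Z}$.
   Context: Setting: a structural causal model over $\mathbf{V}=\mathbf{O}\cup\mathbf{U}$ ($\mathbf{O}$ observed, $\mathbf{U}$ latent) with acyclic causal DAG $D$, each $V_i=f_i(\mathrm{Pa}(V_i,D),\varepsilon_i)$ with independent errors, satisfying causal Markov and faithfulness; conditional independences ($\perp\!\!\!\perp$) among observed variables coincide with m-separations in the MAG over $\mathbf{O}$ obtained by marginalizing latents. The PAG $\mathcal{P}$ represents its Markov equivalence class (marks tail/arrowhead if so in all equivalent MAGs, circle $\circ$ otherwise). $\mathrm{Ch}(X,\mathcal{P})$ is the set of $V$ with $X\to V$ in $\mathcal{P}$. A possibly directed path from $A$ to $B$ is a path on which no edge has an arrowhead at the mark nearer to $A$; $\mathrm{PossDe}(A,\mathcal{P})$ is the set of possible descendants of $A$. $\mathrm{MB}(X)$ is the Markov blanket of $X$ (smallest set rendering $X$ independent of all other observed variables; in the MAG: parents, children, children's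 parents, districts of $X$ and of its children (vertices reachable by bidirected edges only), and parents of those district vertices). "$X$ has no causal effect on $Y$" means the total causal effect is zero, i.e. $f(y\mid do(x))$ does not depend on $x$ (no directed path from $X$ to $Y$ in $D$). *)

theory Defs
  imports Main
begin

record 'v mgraph =
  verts  :: "'v set"
  dedges :: "('v \<times> 'v) set"   (* (a,b) means a \<rightarrow> b *)
  bedges :: "('v \<times> 'v) set"   (* (a,b) means a \<leftrightarrow> b *)

definition adj :: "'v mgraph \<Rightarrow> 'v \<Rightarrow> 'v \<Rightarrow> bool" where
  "adj G a b \<longleftrightarrow> (a,b) \<in> dedges G \<or> (b,a) \<in> dedges G \<or> (a,b) \<in> bedges G \<or> (b,a) \<in> bedges G"

text \<open>into G a b: the edge between a and b has an arrowhead at b.\<close>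
definition into :: "'v mgraph \<Rightarrow> 'v \<Rightarrow> 'v \<Rightarrow> bool" where
  "into G a b \<longleftrightarrow> (a,b) \<in> dedges G \<or> (a,b) \<in> bedges G \<or> (b,a) \<in> bedges G"

definition anc :: "'v mgraph \<Rightarrow> 'v \<Rightarrow> 'v \<Rightarrow> bool" where
  "anc G a b \<longleftrightarrow> (a,b) \<in> (dedges G)\<^sup>*"

definition is_path :: "'v mgraph \<Rightarrow> 'v list \<Rightarrow> bool" where
  "is_path G p \<longleftrightarrow> p \<noteq> [] \<and> distinct p \<and> set p \<subseteq> verts G \<and>
     (\<forall>i. Suc i < length p \<longrightarrow> adj G (p!i) (p!Suc i))"

definition collider :: "'v mgraph \<Rightarrow> 'v list \<Rightarrow> nat \<Rightarrow> bool" where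
  "collider G p i \<longleftrightarrow> 0 < i \<and> Suc i < length p \<and>
     into G (p!(i-1)) (p!i) \<and> into G (p!Suc i) (p!i)"

definition m_connecting :: "'v mgraph \<Rightarrow> 'v set \<Rightarrow> 'v list \<Rightarrow> bool" where
  "m_connecting G Z p \<longleftrightarrow> is_path G p \<and> hd p \<notin> Z \<and> last p \<notin> Z \<and>
     (\<forall>i. 0 < i \<and> Suc i < length p \<longrightarrow>
        (collider G p i \<longrightarrow> (\<exists>z\<in>Z. anc G (p!i) z)) \<and>
        (\<not> collider G p i \<longrightarrow> p!i \<notin> Z))"

definition msep :: "'v mgraph \<Rightarrow> 'v \<Rightarrow> 'v \<Rightarrow> 'v set \<Rightarrow> bool" where
  "msep G a b Z \<longleftrightarrow> \<not> (\<exists>p. m_connecting G Z p \<and> hd p = a \<and> last p = b)"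

definition dag :: "'v set \<Rightarrow> ('v \<times> 'v) set \<Rightarrow> bool" where
  "dag V E \<longleftrightarrow> finite V \<and> E \<subseteq> V \<times> V \<and> (\<forall>v. (v,v) \<notin> E\<^sup>+)"

definition dag_graph :: "'v set \<Rightarrow> ('v \<times> 'v) set \<Rightarrow> 'v mgraph" where
  "dag_graph V E = \<lparr>verts = V, dedges = E, bedges = {}\<rparr>"

text \<open>Inducing path in D between a and b relative to the latent set V - Ob
  (no selection variables).\<close>
definition inducing_path :: "'v set \<Rightarrow> ('v \<times> 'v) set \<Rightarrow> 'v set \<Rightarrow> 'v \<Rightarrow> 'v \<Rightarrow> 'v list \<Rightarrow> bool" where
  "inducing_path V E Ob a b p \<longleftrightarrow> is_path (dag_graph V E) p \<and> hd p = a \<and> last p = b \<and>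
     (\<forall>i. 0 < i \<and> Suc i < length p \<longrightarrow> p!i \<notin> Ob \<or> collider (dag_graph V E) p i) \<and>
     (\<forall>i. collider (dag_graph V E) p i \<longrightarrow>
          anc (dag_graph V E) (p!i) a \<or> anc (dag_graph V E) (p!i) b)"

definition mag_of :: "'v set \<Rightarrow> ('v \<times> 'v) set \<Rightarrow> 'v set \<Rightarrow> 'v mgraph" where
  "mag_of V E Ob = \<lparr>verts = Ob,
     dedges = {(a,b). a \<in> Ob \<and> b \<in> Ob \<and> a \<noteq> b \<and> (\<exists>p. inducing_path V E Ob a b p) \<and> (a,b) \<in> E\<^sup>*},
     bedges = {(a,b). a \<in> Ob \<and> b \<in> Ob \<and> a \<noteq> b \<and> (\<exists>p. inducing_path V E Ob a b p) \<and>
                      (a,b) \<notin> E\<^sup>* \<and> (b,a) \<notin> E\<^sup>*}\<rparr>"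

definition cond_indep :: "'v set \<Rightarrow> ('v \<times> 'v) set \<Rightarrow> 'v set \<Rightarrow> 'v \<Rightarrow> 'v \<Rightarrow> 'v set \<Rightarrow> bool" where
  "cond_indep V E Ob a b Z \<longleftrightarrow> msep (mag_of V E Ob) a b Z"

definition is_mag :: "'v set \<Rightarrow> 'v mgraph \<Rightarrow> bool" where
  "is_mag Ob G \<longleftrightarrow> verts G = Ob \<and> dedges G \<subseteq> Ob \<times> Ob \<and> bedges G \<subseteq> Ob \<times> Ob \<and>
     sym (bedges G) \<and> (\<forall>a. (a,a) \<notin> bedges G) \<and>
     (\<forall>a b. (a,b) \<in> dedges G \<longrightarrow> (a,b) \<notin> bedges G) \<and>
     (\<forall>a. (a,a) \<notin> (dedges G)\<^sup>+) \<and>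
     (\<forall>a b. (a,b) \<in> bedges G \<longrightarrow> \<not> anc G a b) \<and>
     (\<forall>a\<in>Ob. \<forall>b\<in>Ob. a \<noteq> b \<and> \<not> adj G a b \<longrightarrow> (\<exists>Z \<subseteq> Ob - {a,b}. msep G a b Z))"

definition markov_equiv :: "'v set \<Rightarrow> 'v mgraph \<Rightarrow> 'v mgraph \<Rightarrow> bool" where
  "markov_equiv Ob G H \<longleftrightarrow>
     (\<forall>a\<in>Ob. \<forall>b\<in>Ob. \<forall>Z. Z \<subseteq> Ob - {a,b} \<longrightarrow> (msep G a b Z \<longleftrightarrow> msep H a b Z))"

definition mec :: "'v set \<Rightarrow> 'v mgraph \<Rightarrow> 'v mgraph set" where
  "mec Ob G = {H. is_mag Ob H \<and> markov_equiv Ob G H}"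

datatype mark = Tail | Arrowhead | Circle

text \<open>A PAG: P a b = Some m iff a and b are adjacent and the edge has mark m at b.\<close>
type_synonym 'v pag = "'v \<Rightarrow> 'v \<Rightarrow> mark option"

definition pag_of :: "'v set \<Rightarrow> ('v \<times> 'v) set \<Rightarrow> 'v set \<Rightarrow> 'v pag" where
  "pag_of V E Ob a b =
     (let M = mag_of V E Ob; C = mec Ob M in
      if \<not> adj M a b then None
      else if (\<forall>H\<in>C. into H a b) then Some Arrowhead
      else if (\<forall>H\<in>C. \<not> into H a b) then Some Tail
      else Some Circle)"

definition pag_children :: "'v pag \<Rightarrow> 'v \<Rightarrow> 'v set" where
  "pag_children P X = {W. P W X = Some Tail \<and> P X W = Some Arrowhead}"

definition poss_step :: "'v pag \<Rightarrow> 'v \<Rightarrow> 'v \<Rightarrow> bool" where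
  "poss_step P a b \<longleftrightarrow> P a b \<noteq> None \<and> P b a \<noteq> Some Arrowhead"

definition poss_de :: "'v pag \<Rightarrow> 'v \<Rightarrow> 'v set" where
  "poss_de P X = {W. (X,W) \<in> {(a,b). poss_step P a b}\<^sup>*}"

definition parents :: "'v mgraph \<Rightarrow> 'v \<Rightarrow> 'v set" where
  "parents G v = {u. (u,v) \<in> dedges G}"

definition children :: "'v mgraph \<Rightarrow> 'v \<Rightarrow> 'v set" where
  "children G v = {w. (v,w) \<in> dedges G}"

definition district :: "'v mgraph \<Rightarrow> 'v \<Rightarrow> 'v set" where
  "district G v = {w. (v,w) \<in> (bedges G)\<^sup>*}"

definition markov_blanket :: "'v mgraph \<Rightarrow> 'v \<Rightarrow> 'v set" where
  "markov_blanket G X =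
     (let D = district G X \<union> (\<Union>C\<in>children G X. district G C) in
      (parents G X \<union> children G X \<union> (\<Union>C\<in>children G X. parents G C) \<union> D \<union>
       (\<Union>W\<in>D. parents G W)) - {X})"

end

theory Submission
  imports Defs
begin

text \<open>If X were an ancestor of Y, then, X and Y being observed, X would also be an ancestor of
  Y in the latent projection M. Every directed path of M is possibly directed in the PAG,
  because M itself belongs to its Markov equivalence class; this membership rests on the
  maximality of M, whose proof chains inducing paths along collider paths. Hence Z avoids a
  directed path of M from X to Y, and appending this path to an m-connecting path ending in X
  (the trivial path in case (i), one from S in case (ii)) gives an m-connecting path ending
  in Y, contradicting the independence assumed for Y.\<close>

section \<open>Walks and colliders in mixed graphs\<close>

definition walk :: "'v mgraph \<Rightarrow> 'v list \<Rightarrow> bool" where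
  "walk G p \<longleftrightarrow> p \<noteq> [] \<and> (\<forall>i. Suc i < length p \<longrightarrow> adj G (p!i) (p!Suc i))"

lemma adj_commute: "adj G a b \<longleftrightarrow> adj G b a"
  unfolding adj_def by auto

lemma dedge_into: "(a, b) \<in> dedges G \<Longrightarrow> into G a b"
  unfolding into_def by auto

lemma adj_not_into_dedge: "adj G a b \<Longrightarrow> \<not> into G b a \<Longrightarrow> (a, b) \<in> dedges G"
  unfolding adj_def into_def by auto

lemma is_path_walk: "is_path G p \<Longrightarrow> walk G p"
  unfolding is_path_def walk_def by auto

lemma walk_adj_Suc: "walk G p \<Longrightarrow> Suc i < length p \<Longrightarrow> adj G (p!i) (p!Suc i)"
  unfolding walk_def by auto

lemma walk_adj_pred: "walk G p \<Longrightarrow> 0 < i \<Longrightarrow> i < length p \<Longrightarrow> adj G (p!(i - 1)) (p!i)"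
  using walk_adj_Suc[of G p "i - 1"] by simp

lemma walk_dedge_forward:
  assumes "walk G p" "Suc k < length p" "(p!k, p!Suc k) \<in> dedges G"
  shows "\<exists>m. k < m \<and> m < length p \<and> (p!k, p!m) \<in> (dedges G)\<^sup>+ \<and>
    (Suc m = length p \<or> collider G p m)"
  using assms(2,3)
proof (induction "length p - Suc k" arbitrary: k rule: less_induct)
  case less
  show ?case
  proof (cases "Suc (Suc k) = length p \<or> collider G p (Suc k)")
    case True
    then show ?thesis using less.prems by (intro exI[of _ "Suc k"]) auto
  next
    case False
    then have lt: "Suc (Suc k) < length p" and "\<not> collider G p (Suc k)"
      using less.prems by auto
    moreover have "into G (p!k) (p!Suc k)" using less.prems(2) by (rule dedge_into)
    ultimately have "\<not> into G (p!Suc (Suc k)) (p!Suc k)" unfolding collider_def by auto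
    then have next_edge: "(p!Suc k, p!Suc (Suc k)) \<in> dedges G"
      using walk_adj_Suc[OF assms(1) lt] by (rule adj_not_into_dedge[rotated])
    have "length p - Suc (Suc k) < length p - Suc k" using lt by simp
    then obtain m where "Suc k < m" "m < length p" "(p!Suc k, p!m) \<in> (dedges G)\<^sup>+"
      "Suc m = length p \<or> collider G p m"
      using less.hyps[OF _ lt next_edge] by blast
    then show ?thesis using less.prems(2) by (intro exI[of _ m]) auto
  qed
qed

lemma walk_dedge_backward:
  assumes "walk G p" "k < length p" "0 < k" "(p!k, p!(k - 1)) \<in> dedges G"
  shows "\<exists>m<k. (p!k, p!m) \<in> (dedges G)\<^sup>+ \<and> (m = 0 \<or> collider G p m)"
  using assms(2-)
proof (induction k)
  case 0
  then show ?case by simp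
next
  case (Suc j)
  show ?case
  proof (cases "j = 0 \<or> collider G p j")
    case True
    then show ?thesis using Suc.prems by (intro exI[of _ j]) auto
  next
    case False
    then have j: "0 < j" and "\<not> collider G p j" by auto
    moreover have "into G (p!Suc j) (p!j)" using Suc.prems(3) by (intro dedge_into) simp
    ultimately have "\<not> into G (p!(j - 1)) (p!j)" using Suc.prems unfolding collider_def by auto
    with walk_adj_pred[OF assms(1) j] Suc.prems have "(p!j, p!(j - 1)) \<in> dedges G"
      by (simp add: adj_commute adj_not_into_dedge)
    then obtain m where "m < j" "(p!j, p!m) \<in> (dedges G)\<^sup>+" "m = 0 \<or> collider G p m"
      using Suc.IH Suc.prems j by auto
    then show ?thesis using Suc.prems(3) by (intro exI[of _ m]) auto
  qed
qed

lemma converse_rtrancl_closed: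
  assumes "(x, y) \<in> r\<^sup>*" "y \<in> A" "\<And>x y. (x, y) \<in> r \<Longrightarrow> y \<in> A \<Longrightarrow> x \<in> A"
  shows "x \<in> A"
  using assms(1,2) by (induction rule: converse_rtrancl_induct) (auto intro: assms(3))

text \<open>Leaving a non-collider along an outgoing edge, one keeps following directed edges
  until the next collider or endpoint.\<close>
lemma walk_nth_in_ancestral_set:
  assumes walk: "walk G p" and ends: "hd p \<in> A" "last p \<in> A"
    and colliders: "\<And>i. collider G p i \<Longrightarrow> p!i \<in> A"
    and closed: "\<And>x y. (x, y) \<in> dedges G \<Longrightarrow> y \<in> A \<Longrightarrow> x \<in> A"
    and i: "i < length p"
  shows "p!i \<in> A"
proof -
  have "p \<noteq> []" using walk unfolding walk_def by auto
  then have end_or_collider: "p!m \<in> A" if "m = 0 \<or> Suc m = length p \<or> collider G p m" for m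
    using that ends colliders by (auto simp: hd_conv_nth last_conv_nth dest: sym)
  show ?thesis
  proof (cases "i = 0 \<or> Suc i = length p \<or> collider G p i")
    case True
    then show ?thesis by (rule end_or_collider)
  next
    case False
    then have i': "0 < i" "Suc i < length p" "\<not> collider G p i" using i by auto
    then have "\<not> into G (p!(i - 1)) (p!i) \<or> \<not> into G (p!Suc i) (p!i)"
      unfolding collider_def by auto
    then show ?thesis
    proof
      assume "\<not> into G (p!(i - 1)) (p!i)"
      with walk_adj_pred[OF walk i'(1) i] have "(p!i, p!(i - 1)) \<in> dedges G"
        by (simp add: adj_commute adj_not_into_dedge)
      then obtain m where "(p!i, p!m) \<in> (dedges G)\<^sup>+" "m = 0 \<or> collider G p m"
        using walk_dedge_backward[OF walk i i'(1)] by auto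
      then show ?thesis using end_or_collider[of m]
        by (meson converse_rtrancl_closed trancl_into_rtrancl closed)
    next
      assume "\<not> into G (p!Suc i) (p!i)"
      with walk_adj_Suc[OF walk i'(2)] have "(p!i, p!Suc i) \<in> dedges G"
        by (rule adj_not_into_dedge)
      then obtain m where "(p!i, p!m) \<in> (dedges G)\<^sup>+" "Suc m = length p \<or> collider G p m"
        using walk_dedge_forward[OF walk i'(2)] by auto
      then show ?thesis using end_or_collider[of m]
        by (meson converse_rtrancl_closed trancl_into_rtrancl closed)
    qed
  qed
qed

lemma collider_append: "Suc i < length w \<Longrightarrow> collider G (w @ u) i \<longleftrightarrow> collider G w i"
  unfolding collider_def by (auto simp: nth_append)

lemma collider_take: "Suc i < n \<Longrightarrow> collider G (take n w) i \<longleftrightarrow> collider G w i"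
  unfolding collider_def by auto

lemma collider_drop: "0 < i \<Longrightarrow> collider G (drop j w) i \<longleftrightarrow> collider G w (i + j)"
  unfolding collider_def by (auto simp: add.commute)

lemma collider_rev: "collider G (rev p) i \<longleftrightarrow> collider G p (length p - 1 - i)"
proof (cases "0 < i \<and> Suc i < length p")
  case True
  define j where "j = length p - 1 - i"
  have j: "0 < j" "Suc j < length p" "j - 1 = length p - Suc (Suc i)" "Suc j = length p - i"
    using True by (auto simp: j_def)
  have "rev p ! (i - 1) = p ! Suc j" "rev p ! i = p ! j" "rev p ! Suc i = p ! (j - 1)"
    using True j by (auto simp: rev_nth j_def Suc_diff_Suc)
  then show ?thesis using True j unfolding collider_def j_def[symmetric] by auto
next
  case False
  then show ?thesis unfolding collider_def by auto
qed

lemma is_path_rev: "is_path G p \<Longrightarrow> is_path G (rev p)"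
  unfolding is_path_def
proof (intro conjI allI impI; (elim conjE)?)
  fix i assume adj: "\<forall>i. Suc i < length p \<longrightarrow> adj G (p!i) (p!Suc i)"
    and i: "Suc i < length (rev p)"
  define j where "j = length p - Suc (Suc i)"
  have "Suc j < length p" "rev p ! i = p ! Suc j" "rev p ! Suc i = p ! j"
    using i by (auto simp: rev_nth j_def Suc_diff_Suc)
  then show "adj G (rev p ! i) (rev p ! Suc i)" using adj adj_commute by metis
qed auto

lemma walk_take: "walk G w \<Longrightarrow> 0 < n \<Longrightarrow> walk G (take n w)"
  unfolding walk_def by auto

lemma walk_drop: "walk G w \<Longrightarrow> j < length w \<Longrightarrow> walk G (drop j w)"
  unfolding walk_def by (auto simp: add.commute[of j])

lemma nth_append_tl_right:
  assumes "w \<noteq> []" "u \<noteq> []" "hd u = last w" "length w - 1 \<le> i"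
  shows "(w @ tl u)!i = u!(i - (length w - 1))"
proof (cases "i = length w - 1")
  case True
  then show ?thesis using assms by (simp add: nth_append last_conv_nth hd_conv_nth)
next
  case False
  then have "length w \<le> i" using assms by arith
  moreover from this have "i - (length w - 1) = Suc (i - length w)"
    using assms(1) by (cases w) auto
  ultimately show ?thesis using assms(2) by (cases u) (simp_all add: nth_append)
qed

lemma last_append_tl: "w \<noteq> [] \<Longrightarrow> hd u = last w \<Longrightarrow> u \<noteq> [] \<Longrightarrow> last (w @ tl u) = last u"
  by (cases u) (auto simp: last_tl)

lemma nth_append_tl_penultimate:
  assumes "w \<noteq> []" "2 \<le> length u" "hd u = last w"
  shows "(w @ tl u)!(length (w @ tl u) - 2) = u!(length u - 2)"
proof -
  have "length w - 1 \<le> length (w @ tl u) - 2"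
    "length (w @ tl u) - 2 - (length w - 1) = length u - 2"
    using assms by auto
  then show ?thesis using nth_append_tl_right[of w u] assms by fastforce
qed

lemma walk_append_tl:
  assumes w: "walk G w" and u: "walk G u" and hd_u: "hd u = last w"
  shows "walk G (w @ tl u)"
proof -
  have ne: "w \<noteq> []" "u \<noteq> []" using w u unfolding walk_def by auto
  have "adj G ((w @ tl u)!i) ((w @ tl u)!Suc i)" if i: "Suc i < length (w @ tl u)" for i
  proof (cases "Suc i < length w")
    case True
    then show ?thesis using walk_adj_Suc[OF w True] by (simp add: nth_append)
  next
    case False
    define j where "j = i - (length w - 1)"
    have "length w - 1 \<le> i" using False by simp
    then have "Suc j < length u" "(w @ tl u)!i = u!j" "(w @ tl u)!Suc i = u!Suc j"
      using i False nth_append_tl_right[OF ne hd_u, of i]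
        nth_append_tl_right[OF ne hd_u, of "Suc i"]
      unfolding j_def by (auto simp: Suc_diff_le)
    then show ?thesis using walk_adj_Suc[OF u] by simp
  qed
  then show ?thesis using ne unfolding walk_def by simp
qed

lemma collider_append_tl_right:
  assumes ne: "w \<noteq> []" "u \<noteq> []" and hd_u: "hd u = last w" and i: "length w - 1 < i"
  shows "collider G (w @ tl u) i \<longleftrightarrow> collider G u (i - (length w - 1))"
proof -
  define j where "j = i - (length w - 1)"
  have "length (w @ tl u) = length w + length u - 1" "0 < length w" "0 < length u"
    using ne by (cases u; simp)+
  then have "Suc i < length (w @ tl u) \<longleftrightarrow> Suc j < length u"
    using i unfolding j_def by arith
  moreover have "0 < j" "(w @ tl u)!(i - 1) = u!(j - 1)" "(w @ tl u)!i = u!j"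
    "(w @ tl u)!Suc i = u!Suc j"
    using i ne nth_append_tl_right[OF ne hd_u, of "i - 1"] nth_append_tl_right[OF ne hd_u, of i]
      nth_append_tl_right[OF ne hd_u, of "Suc i"]
    unfolding j_def by (auto simp: Suc_diff_le)
  ultimately show ?thesis using i unfolding collider_def j_def[symmetric] by auto
qed

lemma collider_append_tl_junction:
  assumes "2 \<le> length w" "2 \<le> length u" "hd u = last w"
  shows "collider G (w @ tl u) (length w - 1) \<longleftrightarrow>
    into G (w!(length w - 2)) (last w) \<and> into G (u!1) (hd u)"
proof -
  have "w \<noteq> []" using assms by auto
  then have "(w @ tl u)!(length w - 1 - 1) = w!(length w - 2)"
    "(w @ tl u)!(length w - 1) = last w" "(w @ tl u)!Suc (length w - 1) = u!1"
    using assms by (auto simp: nth_append last_conv_nth nth_tl numeral_2_eq_2)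
  then show ?thesis using assms unfolding collider_def by auto
qed

section \<open>Inducing paths and inducing walks\<close>

lemma dag_graph_simps [simp]:
  "verts (dag_graph V E) = V" "dedges (dag_graph V E) = E" "bedges (dag_graph V E) = {}"
  by (simp_all add: dag_graph_def)

lemma adj_dag_graph [simp]: "adj (dag_graph V E) x y \<longleftrightarrow> (x, y) \<in> E \<or> (y, x) \<in> E"
  by (auto simp: adj_def)

lemma into_dag_graph [simp]: "into (dag_graph V E) x y \<longleftrightarrow> (x, y) \<in> E"
  by (auto simp: into_def)

lemma anc_dag_graph [simp]: "anc (dag_graph V E) x y \<longleftrightarrow> (x, y) \<in> E\<^sup>*"
  by (auto simp: anc_def)

lemma dag_trancl_not_rtrancl: "dag V E \<Longrightarrow> (x, y) \<in> E\<^sup>+ \<Longrightarrow> (y, x) \<notin> E\<^sup>*"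
  unfolding dag_def by (meson trancl_rtrancl_trancl)

lemma inducing_path_rev:
  assumes "inducing_path V E Ob a b p"
  shows "inducing_path V E Ob b a (rev p)"
proof -
  let ?D = "dag_graph V E"
  have p: "is_path ?D p" "hd p = a" "last p = b"
    "\<And>i. 0 < i \<and> Suc i < length p \<Longrightarrow> p!i \<notin> Ob \<or> collider ?D p i"
    "\<And>i. collider ?D p i \<Longrightarrow> anc ?D (p!i) a \<or> anc ?D (p!i) b"
    using assms unfolding inducing_path_def by blast+
  have "p \<noteq> []" using p(1) unfolding is_path_def by auto
  have nth_rev: "rev p ! i = p ! (length p - 1 - i)" if "i < length p" for i
    using that by (simp add: rev_nth)
  show ?thesis unfolding inducing_path_def
  proof (intro conjI allI impI)
    show "is_path ?D (rev p)" using p(1) by (rule is_path_rev)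
    show "hd (rev p) = b" "last (rev p) = a" using p \<open>p \<noteq> []\<close> by (simp_all add: hd_rev last_rev)
  next
    fix i assume "0 < i \<and> Suc i < length (rev p)"
    then show "rev p ! i \<notin> Ob \<or> collider ?D (rev p) i"
      using p(4)[of "length p - 1 - i"] nth_rev[of i] collider_rev by fastforce
  next
    fix i assume "collider ?D (rev p) i"
    then have "collider ?D p (length p - 1 - i)" "i < length p"
      by (simp_all add: collider_rev, auto simp: collider_def)
    then show "anc ?D (rev p ! i) b \<or> anc ?D (rev p ! i) a" using p(5) nth_rev by auto
  qed
qed

lemma inducing_path_length: "inducing_path V E Ob a b p \<Longrightarrow> a \<noteq> b \<Longrightarrow> 2 \<le> length p"
  unfolding inducing_path_def is_path_def by (cases p; cases "tl p"; auto)

text \<open>An inducing path leaving its endpoint b would make b an ancestor of a: the directed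
  edges out of b continue along the path up to a collider or up to a, and every collider
  is an ancestor of an endpoint.\<close>
lemma inducing_path_last_edge_into:
  assumes dag: "dag V E" and ip: "inducing_path V E Ob a b p" and "a \<noteq> b" and "(b, a) \<notin> E\<^sup>*"
  shows "(p!(length p - 2), last p) \<in> E"
proof (rule ccontr)
  let ?D = "dag_graph V E"
  assume not_into: "(p!(length p - 2), last p) \<notin> E"
  have len: "2 \<le> length p" using inducing_path_length[OF ip \<open>a \<noteq> b\<close>] .
  then have "p \<noteq> []" by auto
  then have walk: "walk ?D p" and ends: "p!0 = a" "p!(length p - 1) = b"
    using ip unfolding inducing_path_def
    by (auto intro: is_path_walk simp: hd_conv_nth last_conv_nth)
  have "adj ?D (p!(length p - 1 - 1)) (p!(length p - 1))"
    using walk_adj_pred[OF walk, of "length p - 1"] len by simp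
  then have out: "(p!(length p - 1), p!(length p - 1 - 1)) \<in> dedges ?D"
    using not_into len ends \<open>p \<noteq> []\<close> by (simp add: numeral_2_eq_2 last_conv_nth)
  have "length p - 1 < length p" "0 < length p - 1" using len by auto
  then obtain m where "(b, p!m) \<in> E\<^sup>+" "m = 0 \<or> collider ?D p m"
    using walk_dedge_backward[OF walk _ _ out] ends by auto
  moreover have "(p!m, a) \<in> E\<^sup>* \<or> (p!m, b) \<in> E\<^sup>*" if "collider ?D p m"
    using ip that unfolding inducing_path_def by auto
  ultimately show False
    using ends \<open>(b, a) \<notin> E\<^sup>*\<close> dag_trancl_not_rtrancl[OF dag]
    by (metis trancl_into_rtrancl rtrancl_trans)
qed

lemma inducing_path_first_edge_into:
  assumes dag: "dag V E" and ip: "inducing_path V E Ob a b p" and "a \<noteq> b" and "(a, b) \<notin> E\<^sup>*"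
  shows "(p!1, hd p) \<in> E"
proof -
  have len: "2 \<le> length p" using inducing_path_length[OF ip \<open>a \<noteq> b\<close>] .
  have "(rev p!(length p - 2), last (rev p)) \<in> E"
    using inducing_path_last_edge_into[OF dag inducing_path_rev[OF ip]] assms(3,4) by auto
  moreover have "rev p!(length p - 2) = p!1" "last (rev p) = hd p" using len
    by (auto simp: rev_nth last_rev)
  ultimately show ?thesis by simp
qed

text \<open>Inducing paths with the distinctness requirement dropped and with the set A, which
  for an inducing path consists of the ancestors of its endpoints, as a parameter: such
  walks can be concatenated and shortcut.\<close>
definition inducing_walk :: "'v set \<Rightarrow> ('v \<times> 'v) set \<Rightarrow> 'v set \<Rightarrow> 'v set \<Rightarrow> 'v list \<Rightarrow> bool" where
  "inducing_walk V E Ob A w \<longleftrightarrow> walk (dag_graph V E) w \<and> set w \<subseteq> V \<and>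
     (\<forall>i. 0 < i \<and> Suc i < length w \<longrightarrow> w!i \<notin> Ob \<or> collider (dag_graph V E) w i) \<and>
     (\<forall>i. collider (dag_graph V E) w i \<longrightarrow> w!i \<in> A)"

lemma inducing_path_iff:
  "inducing_path V E Ob a b p \<longleftrightarrow> is_path (dag_graph V E) p \<and> hd p = a \<and> last p = b \<and>
     inducing_walk V E Ob {x. (x, a) \<in> E\<^sup>* \<or> (x, b) \<in> E\<^sup>*} p"
  unfolding inducing_path_def inducing_walk_def is_path_def walk_def by auto

text \<open>The junction may become a new collider, hence the hypothesis on w!i.\<close>
lemma inducing_walk_shortcut:
  assumes w: "inducing_walk V E Ob A w" and ij: "i < j" "j < length w" "w!i = w!j"
    and "w!i \<in> A"
  shows "inducing_walk V E Ob A (take (Suc i) w @ tl (drop j w))"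
proof -
  let ?D = "dag_graph V E" and ?u = "take (Suc i) w" and ?v = "drop j w"
  let ?q = "?u @ tl ?v"
  have walk: "walk ?D w" and "set w \<subseteq> V"
    and latent: "\<And>k. 0 < k \<and> Suc k < length w \<Longrightarrow> w!k \<notin> Ob \<or> collider ?D w k"
    and colliders: "\<And>k. collider ?D w k \<Longrightarrow> w!k \<in> A"
    using w unfolding inducing_walk_def by auto
  have u: "?u \<noteq> []" "length ?u = Suc i" "last ?u = w!i"
    using ij by (auto simp: take_Suc_conv_app_nth)
  then have v: "?v \<noteq> []" "hd ?v = last ?u" using ij by (auto simp: hd_drop_conv_nth)
  have q_walk: "walk ?D ?q" using walk_append_tl[OF walk_take[OF walk] walk_drop[OF walk]] ij v
    by simp
  have length_q: "length ?q = Suc i + (length w - Suc j)" using ij by simp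
  have before: "?q!k = w!k" "collider ?D ?q k \<longleftrightarrow> collider ?D w k" if "k < i" for k
    using that ij collider_append[of k ?u ?D "tl ?v"] collider_take[of k "Suc i" ?D w]
    by (auto simp: nth_append)
  have after: "?q!k = w!(k - i + j)" "collider ?D ?q k \<longleftrightarrow> collider ?D w (k - i + j)"
    if "i < k" for k
    using that nth_append_tl_right[OF u(1) v] collider_append_tl_right[OF u(1) v, of k ?D]
      collider_drop[of "k - i" ?D j w] ij
    by (auto simp: u(2) add.commute)
  have junction: "collider ?D ?q i" if "0 < i" "Suc i < length ?q" "w!i \<in> Ob"
  proof -
    have "collider ?D w i" "collider ?D w j" using latent[of i] latent[of j] that ij length_q
      by (auto simp: ij(3))
    then have "into ?D (w!(i - 1)) (w!i)" "into ?D (w!Suc j) (w!j)"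
      unfolding collider_def by auto
    moreover have "?u!(length ?u - 2) = w!(i - 1)" "?v!1 = w!Suc j"
      using that ij u(2) length_q by auto
    ultimately show ?thesis
      using collider_append_tl_junction[of ?u ?v ?D] that ij u v length_q by auto
  qed
  have "?q!i = w!i" using u by (simp add: nth_append)
  then have "(0 < k \<and> Suc k < length ?q \<longrightarrow> ?q!k \<notin> Ob \<or> collider ?D ?q k) \<and>
    (collider ?D ?q k \<longrightarrow> ?q!k \<in> A)" for k
    using before[of k] after[of k] latent[of k] latent[of "k - i + j"] colliders[of k]
      colliders[of "k - i + j"] junction \<open>w!i \<in> A\<close> length_q ij
    by (cases k i rule: linorder_cases) (auto simp: collider_def)
  moreover have "set ?q \<subseteq> V" using \<open>set w \<subseteq> V\<close>
    by (auto simp: tl_drop drop_Suc[symmetric] dest: in_set_takeD in_set_dropD)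
  ultimately show ?thesis using q_walk unfolding inducing_walk_def by blast
qed

lemma inducing_walk_imp_inducing_path:
  assumes "inducing_walk V E Ob {x. (x, a) \<in> E\<^sup>* \<or> (x, b) \<in> E\<^sup>*} w" "hd w = a" "last w = b"
  shows "\<exists>p. inducing_path V E Ob a b p"
  using assms
proof (induction "length w" arbitrary: w rule: less_induct)
  case less
  let ?A = "{x. (x, a) \<in> E\<^sup>* \<or> (x, b) \<in> E\<^sup>*}"
  have walk: "walk (dag_graph V E) w" using less.prems unfolding inducing_walk_def by auto
  have in_A: "w!k \<in> ?A" if "k < length w" for k
  proof (rule walk_nth_in_ancestral_set[OF walk _ _ _ _ that])
    show "hd w \<in> ?A" "last w \<in> ?A" using less.prems(2,3) by auto
    show "collider (dag_graph V E) w i \<Longrightarrow> w!i \<in> ?A" for i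
      using less.prems(1) unfolding inducing_walk_def by blast
    show "(x, y) \<in> dedges (dag_graph V E) \<Longrightarrow> y \<in> ?A \<Longrightarrow> x \<in> ?A" for x y
      by (auto intro: converse_rtrancl_into_rtrancl)
  qed
  show ?case
  proof (cases "distinct w")
    case True
    then have "inducing_path V E Ob a b w"
      using less.prems unfolding inducing_path_iff is_path_def inducing_walk_def walk_def by auto
    then show ?thesis by blast
  next
    case False
    then obtain i j where ij: "i < j" "j < length w" "w!i = w!j"
      unfolding distinct_conv_nth by (metis linorder_neqE_nat)
    let ?q = "take (Suc i) w @ tl (drop j w)"
    have "inducing_walk V E Ob ?A ?q"
      using inducing_walk_shortcut[OF less.prems(1) ij in_A] ij by auto
    moreover have "hd ?q = a" using less.prems(2) ij by (cases w) auto
    moreover have "last ?q = b" "length ?q < length w"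
      using less.prems(3) ij last_append_tl[of "take (Suc i) w" "drop j w"]
      by (auto simp: take_Suc_conv_app_nth hd_drop_conv_nth)
    ultimately show ?thesis using less.hyps by blast
  qed
qed

lemma inducing_walk_append:
  assumes w: "inducing_walk V E Ob A w" and u: "inducing_walk V E Ob A u"
    and hd_u: "hd u = last w" and len: "2 \<le> length w" "2 \<le> length u"
    and into: "(w!(length w - 2), last w) \<in> E" "(u!1, hd u) \<in> E" and "last w \<in> A"
  shows "inducing_walk V E Ob A (w @ tl u)"
proof -
  let ?D = "dag_graph V E" and ?q = "w @ tl u"
  have ne: "w \<noteq> []" "u \<noteq> []" using len by auto
  have length_q: "length ?q = length w + length u - 1" using ne by (cases u) auto
  have before: "?q!k = w!k" "collider ?D ?q k \<longleftrightarrow> collider ?D w k" if "k < length w - 1" for k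
    using that collider_append[of k w ?D "tl u"] by (auto simp: nth_append)
  have after: "?q!k = u!(k - (length w - 1))"
    "collider ?D ?q k \<longleftrightarrow> collider ?D u (k - (length w - 1))" if "length w - 1 < k" for k
    using that nth_append_tl_right[OF ne hd_u] collider_append_tl_right[OF ne hd_u] by auto
  have junction: "?q!(length w - 1) = last w" "collider ?D ?q (length w - 1)"
    using collider_append_tl_junction[OF len hd_u] into ne by (auto simp: nth_append last_conv_nth)
  have "(0 < k \<and> Suc k < length ?q \<longrightarrow> ?q!k \<notin> Ob \<or> collider ?D ?q k) \<and>
    (collider ?D ?q k \<longrightarrow> ?q!k \<in> A)" for k
  proof (cases k "length w - 1" rule: linorder_cases)
    case less
    then show ?thesis using before[OF less] w unfolding inducing_walk_def by auto
  next
    case equal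
    then show ?thesis using junction \<open>last w \<in> A\<close> by auto
  next
    case greater
    have "0 < length w" "0 < length u" using ne by auto
    then have "Suc k < length ?q \<longleftrightarrow> Suc (k - (length w - 1)) < length u"
      unfolding length_q using greater by arith
    moreover have "0 < k - (length w - 1)" using greater by simp
    ultimately show ?thesis using after[OF greater] u unfolding inducing_walk_def by auto
  qed
  moreover have "walk ?D ?q" using walk_append_tl w u hd_u unfolding inducing_walk_def by blast
  moreover have "set ?q \<subseteq> V" using w u unfolding inducing_walk_def by (cases u) auto
  ultimately show ?thesis unfolding inducing_walk_def by blast
qed

section \<open>The latent projection is a maximal ancestral graph\<close>

lemma mag_of_simps [simp]:
  "verts (mag_of V E Ob) = Ob"
  "dedges (mag_of V E Ob) = {(a, b). a \<in> Ob \<and> b \<in> Ob \<and> a \<noteq> b \<and>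
     (\<exists>p. inducing_path V E Ob a b p) \<and> (a, b) \<in> E\<^sup>*}"
  "bedges (mag_of V E Ob) = {(a, b). a \<in> Ob \<and> b \<in> Ob \<and> a \<noteq> b \<and>
     (\<exists>p. inducing_path V E Ob a b p) \<and> (a, b) \<notin> E\<^sup>* \<and> (b, a) \<notin> E\<^sup>*}"
  by (simp_all add: mag_of_def)

lemma dedge_mag_of_trancl: "(x, y) \<in> dedges (mag_of V E Ob) \<Longrightarrow> (x, y) \<in> E\<^sup>+"
  by (auto simp: rtrancl_eq_or_trancl)

lemma trancl_mag_of_trancl: "(x, y) \<in> (dedges (mag_of V E Ob))\<^sup>+ \<Longrightarrow> (x, y) \<in> E\<^sup>+"
  by (induction rule: trancl_induct) (blast dest: dedge_mag_of_trancl intro: trancl_trans)+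

lemma anc_mag_of_rtrancl: "anc (mag_of V E Ob) x y \<Longrightarrow> (x, y) \<in> E\<^sup>*"
  unfolding anc_def by (metis rtrancl_eq_or_trancl trancl_into_rtrancl trancl_mag_of_trancl)

lemma into_mag_of_not_rtrancl: "dag V E \<Longrightarrow> into (mag_of V E Ob) x y \<Longrightarrow> (y, x) \<notin> E\<^sup>*"
  unfolding into_def using dedge_mag_of_trancl dag_trancl_not_rtrancl by fastforce

lemma adj_mag_of_iff:
  "adj (mag_of V E Ob) a b \<longleftrightarrow> a \<in> Ob \<and> b \<in> Ob \<and> a \<noteq> b \<and> (\<exists>p. inducing_path V E Ob a b p)"
  unfolding adj_def by (auto dest: inducing_path_rev)

lemma adj_mag_of_inducing_walk:
  assumes dag: "dag V E" and "adj (mag_of V E Ob) a b"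
    and "{x. (x, a) \<in> E\<^sup>* \<or> (x, b) \<in> E\<^sup>*} \<subseteq> A"
  shows "\<exists>\<pi>. inducing_walk V E Ob A \<pi> \<and> 2 \<le> length \<pi> \<and> hd \<pi> = a \<and> last \<pi> = b \<and>
    ((b, a) \<notin> E\<^sup>* \<longrightarrow> (\<pi>!(length \<pi> - 2), last \<pi>) \<in> E) \<and> ((a, b) \<notin> E\<^sup>* \<longrightarrow> (\<pi>!1, hd \<pi>) \<in> E)"
proof -
  obtain \<pi> where \<pi>: "inducing_path V E Ob a b \<pi>" and "a \<noteq> b"
    using \<open>adj (mag_of V E Ob) a b\<close> unfolding adj_mag_of_iff by blast
  then have "inducing_walk V E Ob A \<pi>" "hd \<pi> = a" "last \<pi> = b"
    using assms(3) unfolding inducing_path_iff inducing_walk_def by blast+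
  then show ?thesis
    using inducing_path_length[OF \<pi> \<open>a \<noteq> b\<close>] inducing_path_last_edge_into[OF dag \<pi> \<open>a \<noteq> b\<close>]
      inducing_path_first_edge_into[OF dag \<pi> \<open>a \<noteq> b\<close>]
    by blast
qed

lemma mag_of_collider_path_inducing_walk:
  assumes dag: "dag V E"
    and p: "is_path (mag_of V E Ob) p"
    and colliders: "\<And>i. 0 < i \<Longrightarrow> Suc i < length p \<Longrightarrow> collider (mag_of V E Ob) p i"
    and "set p \<subseteq> A" and closed: "\<And>x y. (x, y) \<in> E \<Longrightarrow> y \<in> A \<Longrightarrow> x \<in> A"
  shows "0 < k \<Longrightarrow> k < length p \<Longrightarrow>
    \<exists>w. inducing_walk V E Ob A w \<and> 2 \<le> length w \<and> hd w = hd p \<and> last w = p!k \<and>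
      (Suc k < length p \<longrightarrow> (w!(length w - 2), last w) \<in> E)"
proof (induction k)
  case 0
  then show ?case by simp
next
  case (Suc k)
  let ?M = "mag_of V E Ob"
  have "adj ?M (p!k) (p!Suc k)" using p Suc.prems unfolding is_path_def by auto
  moreover have "p!k \<in> A" "p!Suc k \<in> A" using \<open>set p \<subseteq> A\<close> Suc.prems by auto
  then have "{x. (x, p!k) \<in> E\<^sup>* \<or> (x, p!Suc k) \<in> E\<^sup>*} \<subseteq> A"
    using converse_rtrancl_closed[of _ _ E A] closed by blast
  ultimately obtain \<pi> where \<pi>: "inducing_walk V E Ob A \<pi>" "2 \<le> length \<pi>" "hd \<pi> = p!k"
    "last \<pi> = p!Suc k" "(p!Suc k, p!k) \<notin> E\<^sup>* \<Longrightarrow> (\<pi>!(length \<pi> - 2), last \<pi>) \<in> E"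
    "(p!k, p!Suc k) \<notin> E\<^sup>* \<Longrightarrow> (\<pi>!1, hd \<pi>) \<in> E"
    using adj_mag_of_inducing_walk[OF dag] by blast
  have \<pi>_last: "(\<pi>!(length \<pi> - 2), last \<pi>) \<in> E" if "Suc (Suc k) < length p"
    using colliders[of "Suc k"] that \<pi>(5) into_mag_of_not_rtrancl[OF dag]
    unfolding collider_def by auto
  show ?case
  proof (cases "k = 0")
    case True
    then show ?thesis using \<pi> \<pi>_last p
      by (intro exI[of _ \<pi>]) (auto simp: hd_conv_nth is_path_def)
  next
    case False
    then obtain w where w: "inducing_walk V E Ob A w" "2 \<le> length w" "hd w = hd p"
      "last w = p!k" "(w!(length w - 2), last w) \<in> E"
      using Suc by auto
    have "(\<pi>!1, hd \<pi>) \<in> E"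
      using colliders[of k] False Suc.prems \<pi>(6) into_mag_of_not_rtrancl[OF dag]
      unfolding collider_def by auto
    then have "inducing_walk V E Ob A (w @ tl \<pi>)"
      using inducing_walk_append[OF w(1) \<pi>(1)] w \<pi> \<open>p!k \<in> A\<close> by auto
    moreover have ne: "w \<noteq> []" "\<pi> \<noteq> []" using w(2) \<pi>(2) by auto
    moreover from ne have "(w @ tl \<pi>)!(length (w @ tl \<pi>) - 2) = \<pi>!(length \<pi> - 2)"
      "last (w @ tl \<pi>) = last \<pi>" "hd (w @ tl \<pi>) = hd w" "2 \<le> length (w @ tl \<pi>)"
      using nth_append_tl_penultimate[OF ne(1) \<pi>(2)] last_append_tl[OF ne(1) _ ne(2)] w \<pi>
      by auto
    ultimately show ?thesis using w \<pi> \<pi>_last by (intro exI[of _ "w @ tl \<pi>"]) auto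
  qed
qed

lemma m_connecting_mag_of_set_subset:
  assumes p: "m_connecting (mag_of V E Ob) Z p" and "Z \<subseteq> A" "hd p \<in> A" "last p \<in> A"
    and closed: "\<And>x y. (x, y) \<in> E \<Longrightarrow> y \<in> A \<Longrightarrow> x \<in> A"
  shows "set p \<subseteq> A"
proof -
  let ?M = "mag_of V E Ob"
  have closed_rtrancl: "x \<in> A" if "(x, y) \<in> E\<^sup>*" "y \<in> A" for x y
    by (rule converse_rtrancl_closed[OF that]) (fact closed)
  have path: "is_path ?M p" using p unfolding m_connecting_def by blast
  have "p!i \<in> A" if "i < length p" for i
  proof (rule walk_nth_in_ancestral_set[OF is_path_walk[OF path] assms(3,4) _ _ that])
    show "p!i \<in> A" if c: "collider ?M p i" for i
    proof -
      have "0 < i \<and> Suc i < length p" using c unfolding collider_def by blast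
      then obtain z where "z \<in> Z" and anc: "anc ?M (p!i) z"
        using c p unfolding m_connecting_def by blast
      then have "z \<in> A" using \<open>Z \<subseteq> A\<close> by blast
      with anc_mag_of_rtrancl[OF anc] show ?thesis by (rule closed_rtrancl)
    qed
    show "x \<in> A" if "(x, y) \<in> dedges ?M" "y \<in> A" for x y
      using closed_rtrancl[OF trancl_into_rtrancl[OF dedge_mag_of_trancl[OF that(1)]] that(2)] .
  qed
  then show ?thesis by (auto simp: in_set_conv_nth)
qed

text \<open>An m-connecting path relative to the observed proper ancestors of a and b must consist
  of colliders only, and its inducing paths then chain together into one between a and b.\<close>
lemma mag_of_maximal:
  assumes dag: "dag V E" and "a \<noteq> b" and not_adj: "\<not> adj (mag_of V E Ob) a b"
  shows "msep (mag_of V E Ob) a b {z \<in> Ob - {a, b}. (z, a) \<in> E\<^sup>* \<or> (z, b) \<in> E\<^sup>*}"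
  unfolding msep_def
proof
  let ?M = "mag_of V E Ob" and ?A = "{x. (x, a) \<in> E\<^sup>* \<or> (x, b) \<in> E\<^sup>*}"
  let ?Z = "{z \<in> Ob - {a, b}. (z, a) \<in> E\<^sup>* \<or> (z, b) \<in> E\<^sup>*}"
  have closed: "x \<in> ?A" if "(x, y) \<in> E" "y \<in> ?A" for x y
    using that by (blast intro: converse_rtrancl_into_rtrancl)
  assume "\<exists>p. m_connecting ?M ?Z p \<and> hd p = a \<and> last p = b"
  then obtain p where p: "m_connecting ?M ?Z p" "hd p = a" "last p = b" by blast
  have path: "is_path ?M p" and "distinct p" "set p \<subseteq> Ob" "p \<noteq> []"
    and conn: "\<And>i. 0 < i \<and> Suc i < length p \<Longrightarrow> \<not> collider ?M p i \<longrightarrow> p!i \<notin> ?Z"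
    using p(1) unfolding m_connecting_def is_path_def by auto
  have ends: "p!0 = a" "p!(length p - 1) = b"
    using p(2,3) \<open>p \<noteq> []\<close> by (simp_all add: hd_conv_nth last_conv_nth)
  have "set p \<subseteq> ?A"
  proof (rule m_connecting_mag_of_set_subset[OF p(1)])
    show "?Z \<subseteq> ?A" "hd p \<in> ?A" "last p \<in> ?A" using p(2,3) by auto
    show "\<And>x y. (x, y) \<in> E \<Longrightarrow> y \<in> ?A \<Longrightarrow> x \<in> ?A" by (fact closed)
  qed
  have colliders: "collider ?M p i" if "0 < i" "Suc i < length p" for i
  proof (rule ccontr)
    assume "\<not> collider ?M p i"
    then have "p!i \<notin> ?Z" using conn[of i] that by blast
    moreover have "p!i \<noteq> p!0" "p!i \<noteq> p!(length p - 1)"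
      using that nth_eq_iff_index_eq[OF \<open>distinct p\<close>, of i 0]
        nth_eq_iff_index_eq[OF \<open>distinct p\<close>, of i "length p - 1"] \<open>p \<noteq> []\<close> by auto
    moreover have "p!i \<in> Ob \<and> p!i \<in> ?A"
      using nth_mem[OF Suc_lessD[OF that(2)]] \<open>set p \<subseteq> Ob\<close> \<open>set p \<subseteq> ?A\<close> by blast
    ultimately show False using ends by auto
  qed
  have "length p \<noteq> 1" using ends \<open>a \<noteq> b\<close> by auto
  moreover have "0 < length p" using \<open>p \<noteq> []\<close> by simp
  ultimately have "0 < length p - 1" "length p - 1 < length p" by arith+
  then have "\<exists>w. inducing_walk V E Ob ?A w \<and> 2 \<le> length w \<and> hd w = hd p \<and>
    last w = p!(length p - 1) \<and> (Suc (length p - 1) < length p \<longrightarrow> (w!(length w - 2), last w) \<in> E)"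
    by (intro mag_of_collider_path_inducing_walk[OF dag path _ \<open>set p \<subseteq> ?A\<close> closed] colliders)
  then obtain w where "inducing_walk V E Ob ?A w" "hd w = a" "last w = b"
    using p(2) ends by auto
  then obtain q where "inducing_path V E Ob a b q" by (blast dest: inducing_walk_imp_inducing_path)
  moreover have "a \<in> Ob" "b \<in> Ob" using p(2,3) \<open>set p \<subseteq> Ob\<close> \<open>p \<noteq> []\<close> by auto
  ultimately show False using not_adj \<open>a \<noteq> b\<close> unfolding adj_mag_of_iff by blast
qed

lemma is_mag_mag_of:
  assumes dag: "dag V E"
  shows "is_mag Ob (mag_of V E Ob)"
proof -
  let ?M = "mag_of V E Ob"
  have "sym (bedges ?M)" unfolding sym_def by (auto dest: inducing_path_rev)
  moreover have "(a, a) \<notin> (dedges ?M)\<^sup>+" for a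
    using trancl_mag_of_trancl[of a a V E Ob] dag unfolding dag_def by blast
  moreover have "\<not> anc ?M a b" if "(a, b) \<in> bedges ?M" for a b
    using that anc_mag_of_rtrancl[of V E Ob a b] by auto
  moreover have "\<exists>Z \<subseteq> Ob - {a, b}. msep ?M a b Z" if "a \<noteq> b" "\<not> adj ?M a b" for a b
    using mag_of_maximal[OF dag that]
    by (intro exI[where x = "{z \<in> Ob - {a, b}. (z, a) \<in> E\<^sup>* \<or> (z, b) \<in> E\<^sup>*}"]) auto
  ultimately show ?thesis unfolding is_mag_def by auto
qed

lemma mag_of_in_mec: "dag V E \<Longrightarrow> mag_of V E Ob \<in> mec Ob (mag_of V E Ob)"
  unfolding mec_def markov_equiv_def using is_mag_mag_of by blast

text \<open>The PAG cannot put an arrowhead at x: the latent projection itself belongs to its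
  Markov equivalence class and has the tail there.\<close>
lemma dedge_mag_of_poss_step:
  assumes dag: "dag V E" and e: "(x, y) \<in> dedges (mag_of V E Ob)"
  shows "poss_step (pag_of V E Ob) x y"
proof -
  let ?M = "mag_of V E Ob"
  have "adj ?M x y" "adj ?M y x" using e unfolding adj_def by auto
  moreover have "\<not> into ?M y x"
    using into_mag_of_not_rtrancl[OF dag] trancl_into_rtrancl[OF dedge_mag_of_trancl[OF e]] by blast
  ultimately show ?thesis
    using mag_of_in_mec[OF dag] unfolding poss_step_def pag_of_def Let_def by auto
qed

lemma rtrancl_mag_of_poss_de:
  assumes "dag V E" "(x, y) \<in> (dedges (mag_of V E Ob))\<^sup>*"
  shows "y \<in> poss_de (pag_of V E Ob) x"
  using assms(2) unfolding poss_de_def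
proof (induction rule: rtrancl_induct)
  case (step y z)
  then show ?case
    using dedge_mag_of_poss_step[OF assms(1) step(2)] by (simp add: rtrancl_into_rtrancl)
qed simp

section \<open>Directed paths through latent vertices\<close>

definition directed_walk :: "('v \<times> 'v) set \<Rightarrow> 'v list \<Rightarrow> bool" where
  "directed_walk r p \<longleftrightarrow> p \<noteq> [] \<and> (\<forall>i. Suc i < length p \<longrightarrow> (p!i, p!Suc i) \<in> r)"

lemma directed_walk_trancl:
  "directed_walk r p \<Longrightarrow> i < j \<Longrightarrow> j < length p \<Longrightarrow> (p!i, p!j) \<in> r\<^sup>+"
proof (induction j)
  case (Suc j)
  then have "(p!j, p!Suc j) \<in> r" unfolding directed_walk_def by auto
  then show ?case using Suc by (cases "i = j") auto
qed simp

lemma directed_walk_Cons: "directed_walk r p \<Longrightarrow> (x, hd p) \<in> r \<Longrightarrow> directed_walk r (x # p)"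
  unfolding directed_walk_def by (auto simp: nth_Cons hd_conv_nth split: nat.split)

lemma directed_walk_set_Field: "directed_walk r p \<Longrightarrow> 2 \<le> length p \<Longrightarrow> set p \<subseteq> Field r"
proof
  fix x assume p: "directed_walk r p" "2 \<le> length p" and "x \<in> set p"
  then obtain i where i: "i < length p" "p!i = x" by (auto simp: in_set_conv_nth)
  show "x \<in> Field r"
  proof (cases "Suc i < length p")
    case True
    then show ?thesis using p i unfolding directed_walk_def by (auto intro: FieldI1)
  next
    case False
    then have "Suc (i - 1) < length p" "Suc (i - 1) = i" using p(2) i by auto
    then show ?thesis using p i unfolding directed_walk_def by (metis FieldI2)
  qed
qed

text \<open>A directed path whose interior is latent is an inducing path without colliders.\<close>
lemma latent_directed_walk_dedge_mag_of:
  assumes dag: "dag V E" and p: "directed_walk E p" "2 \<le> length p" "hd p \<in> Ob" "last p \<in> Ob"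
    and latent: "\<And>i. 0 < i \<Longrightarrow> Suc i < length p \<Longrightarrow> p!i \<notin> Ob"
  shows "(hd p, last p) \<in> dedges (mag_of V E Ob)"
proof -
  let ?A = "{x. (x, hd p) \<in> E\<^sup>* \<or> (x, last p) \<in> E\<^sup>*}"
  have "p \<noteq> []" using p(2) by auto
  then have ends: "p!0 = hd p" "p!(length p - 1) = last p"
    by (simp_all add: hd_conv_nth last_conv_nth)
  have to_last: "p!i \<in> ?A" if "i < length p" for i
  proof (cases "i = length p - 1")
    case False
    then have "i < length p - 1" "length p - 1 < length p" using that by arith+
    then have "(p!i, last p) \<in> E\<^sup>+" using directed_walk_trancl[OF p(1)] ends(2) by metis
    then show ?thesis by (simp add: trancl_into_rtrancl)
  qed (use ends in simp)
  have "set p \<subseteq> V" using directed_walk_set_Field[OF p(1,2)] dag unfolding dag_def Field_def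
    by blast
  moreover have "walk (dag_graph V E) p" using p(1) unfolding directed_walk_def walk_def by auto
  ultimately have "inducing_walk V E Ob ?A p"
    using latent to_last unfolding inducing_walk_def collider_def by auto
  then obtain q where "inducing_path V E Ob (hd p) (last p) q"
    by (blast dest: inducing_walk_imp_inducing_path)
  moreover have "(hd p, last p) \<in> E\<^sup>+"
    using directed_walk_trancl[OF p(1), of 0 "length p - 1"] p(2) ends by auto
  moreover from this have "hd p \<noteq> last p" using dag unfolding dag_def by auto
  ultimately show ?thesis using p(3,4) by auto
qed

lemma trancl_first_observed:
  assumes dag: "dag V E" and "(x, y) \<in> E\<^sup>+" "y \<in> Ob"
  shows "\<exists>p. directed_walk E p \<and> 2 \<le> length p \<and> hd p = x \<and> last p \<in> Ob \<and>
    (\<forall>i. 0 < i \<and> Suc i < length p \<longrightarrow> p!i \<notin> Ob) \<and> (last p, y) \<in> (dedges (mag_of V E Ob))\<^sup>*"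
  using assms(2,3)
proof (induction rule: converse_trancl_induct)
  case (base x)
  then show ?case by (intro exI[of _ "[x, y]"]) (auto simp: directed_walk_def less_Suc_eq)
next
  case (step x z)
  then obtain p where p: "directed_walk E p" "2 \<le> length p" "hd p = z" "last p \<in> Ob"
    "\<forall>i. 0 < i \<and> Suc i < length p \<longrightarrow> p!i \<notin> Ob" "(last p, y) \<in> (dedges (mag_of V E Ob))\<^sup>*"
    by blast
  show ?case
  proof (cases "z \<in> Ob")
    case True
    then have "(z, last p) \<in> dedges (mag_of V E Ob)"
      using latent_directed_walk_dedge_mag_of[OF dag p(1,2)] p(3,4,5) by auto
    then have "(z, y) \<in> (dedges (mag_of V E Ob))\<^sup>*"
      using p(6) by (rule converse_rtrancl_into_rtrancl)
    then show ?thesis using True step(1)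
      by (intro exI[of _ "[x, z]"]) (auto simp: directed_walk_def less_Suc_eq)
  next
    case False
    have "directed_walk E (x # p)" using p(1,3) step(1) by (intro directed_walk_Cons) auto
    moreover have "(x # p)!i \<notin> Ob" if "0 < i" "Suc i < length (x # p)" for i
    proof -
      obtain k where k: "i = Suc k" using \<open>0 < i\<close> by (cases i) auto
      have "p!0 = z" using p(2,3) by (cases p) auto
      then show ?thesis using k that p(5) False by (cases k) auto
    qed
    ultimately show ?thesis using p by (intro exI[of _ "x # p"]) auto
  qed
qed

lemma trancl_imp_trancl_mag_of:
  assumes dag: "dag V E" and "x \<in> Ob" "y \<in> Ob" "(x, y) \<in> E\<^sup>+"
  shows "(x, y) \<in> (dedges (mag_of V E Ob))\<^sup>+"
proof -
  obtain p where p: "directed_walk E p" "2 \<le> length p" "hd p = x" "last p \<in> Ob"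
    "\<forall>i. 0 < i \<and> Suc i < length p \<longrightarrow> p!i \<notin> Ob" "(last p, y) \<in> (dedges (mag_of V E Ob))\<^sup>*"
    using trancl_first_observed[OF dag assms(4,3)] by blast
  then have "(x, last p) \<in> dedges (mag_of V E Ob)"
    using latent_directed_walk_dedge_mag_of[OF dag p(1,2)] \<open>x \<in> Ob\<close> by auto
  then show ?thesis using p(6) by (rule rtrancl_into_trancl2)
qed

section \<open>Extending m-connecting paths\<close>

lemma m_connecting_take:
  assumes p: "m_connecting G Z p" and j: "j < length p" "p!j \<notin> Z"
  shows "m_connecting G Z (take (Suc j) p)"
proof -
  have "is_path G (take (Suc j) p)"
    using p unfolding m_connecting_def is_path_def by (auto dest: in_set_takeD)
  moreover have "hd (take (Suc j) p) = hd p" using j by (cases p) auto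
  moreover have "last (take (Suc j) p) = p!j" using j by (simp add: take_Suc_conv_app_nth)
  ultimately show ?thesis using p j collider_take[of _ "Suc j" G p]
    unfolding m_connecting_def by auto
qed

lemma m_connecting_snoc:
  assumes p: "m_connecting G Z p" and y: "y \<notin> set p" "y \<in> verts G" "y \<notin> Z"
    and edge: "adj G (last p) y" "\<not> into G y (last p)"
  shows "m_connecting G Z (p @ [y])"
proof -
  have "p \<noteq> []" and last_p: "last p \<notin> Z" using p unfolding m_connecting_def is_path_def by auto
  then have last_nth: "p!(length p - 1) = last p" by (simp add: last_conv_nth)
  have "adj G ((p @ [y])!i) ((p @ [y])!Suc i)" if "Suc i < length (p @ [y])" for i
  proof (cases "Suc i < length p")
    case True
    then show ?thesis using p unfolding m_connecting_def is_path_def by (auto simp: nth_append)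
  next
    case False
    then have "i = length p - 1" using that by auto
    then show ?thesis using edge(1) last_nth \<open>p \<noteq> []\<close> by (simp add: nth_append)
  qed
  then have "is_path G (p @ [y])"
    using p y unfolding m_connecting_def is_path_def by auto
  moreover have non_collider: "\<not> collider G (p @ [y]) (length p - 1)"
    using edge \<open>p \<noteq> []\<close> last_nth unfolding collider_def by (auto simp: nth_append)
  moreover have "(collider G (p @ [y]) i \<longrightarrow> (\<exists>z\<in>Z. anc G ((p @ [y])!i) z)) \<and>
      (\<not> collider G (p @ [y]) i \<longrightarrow> (p @ [y])!i \<notin> Z)"
    if "0 < i" "Suc i < length (p @ [y])" for i
  proof (cases "Suc i < length p")
    case True
    then show ?thesis using p that collider_append[OF True]
      unfolding m_connecting_def by (auto simp: nth_append)
  next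
    case False
    then have "i = length p - 1" using that by auto
    then show ?thesis using non_collider last_p \<open>p \<noteq> []\<close> last_nth by (simp add: nth_append)
  qed
  ultimately show ?thesis using p \<open>p \<noteq> []\<close> y(3) unfolding m_connecting_def by auto
qed

text \<open>The old endpoint becomes a non-collider; if the new vertex is already on the path, the
  path is cut back to it instead.\<close>
lemma m_connecting_extend_dedge:
  assumes p: "m_connecting G Z p" and e: "(last p, y) \<in> dedges G" "\<not> into G y (last p)"
    and y: "y \<in> verts G" "y \<notin> Z"
  shows "\<exists>q. m_connecting G Z q \<and> hd q = hd p \<and> last q = y"
proof (cases "y \<in> set p")
  case True
  then obtain j where "j < length p" "p!j = y" by (auto simp: in_set_conv_nth)
  moreover have "hd (take (Suc j) p) = hd p" using p unfolding m_connecting_def is_path_def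
    by (cases p) auto
  ultimately show ?thesis using m_connecting_take[OF p] y(2)
    by (intro exI[of _ "take (Suc j) p"]) (auto simp: take_Suc_conv_app_nth)
next
  case False
  have "adj G (last p) y" using e unfolding adj_def by auto
  then show ?thesis using m_connecting_snoc[OF p False y(1,2) _ e(2)] p
    by (intro exI[of _ "p @ [y]"]) (auto simp: m_connecting_def is_path_def)
qed

lemma m_connecting_mag_of_extend:
  assumes dag: "dag V E" and p: "m_connecting (mag_of V E Ob) Z p"
    and "(last p, y) \<in> (dedges (mag_of V E Ob))\<^sup>*"
    and avoid: "\<And>v. (last p, v) \<in> (dedges (mag_of V E Ob))\<^sup>* \<Longrightarrow> v \<notin> Z"
  shows "\<exists>q. m_connecting (mag_of V E Ob) Z q \<and> hd q = hd p \<and> last q = y"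
  using assms(3)
proof (induction rule: rtrancl_induct)
  case base
  then show ?case using p by blast
next
  case (step y z)
  then obtain q where q: "m_connecting (mag_of V E Ob) Z q" "hd q = hd p" "last q = y" by blast
  have "\<not> into (mag_of V E Ob) z y"
    using into_mag_of_not_rtrancl[OF dag] trancl_into_rtrancl[OF dedge_mag_of_trancl[OF step(2)]]
    by blast
  moreover have "z \<in> verts (mag_of V E Ob)" "z \<notin> Z"
    using step(2) avoid[OF rtrancl_into_rtrancl[OF step(1,2)]] by auto
  ultimately show ?case using m_connecting_extend_dedge[OF q(1)] step(2) q(2,3) by metis
qed

theorem theorem4:
  fixes V Ob :: "'v set" and E :: "('v \<times> 'v) set" and X Y S :: 'v and Z :: "'v set"
  assumes "dag V E" and "Ob \<subseteq> V" and "X \<in> Ob" and "Y \<in> Ob" and "X \<noteq> Y"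
    and "Z \<subseteq> markov_blanket (mag_of V E Ob) X"
    and "Z \<inter> poss_de (pag_of V E Ob) X = {}"
    and "S \<in> markov_blanket (mag_of V E Ob) X - ({Y} \<union> pag_children (pag_of V E Ob) X)"
    and "cond_indep V E Ob X Y Z \<or> (\<not> cond_indep V E Ob S X Z \<and> cond_indep V E Ob S Y Z)"
  shows "(X, Y) \<notin> E\<^sup>+"
proof
  let ?M = "mag_of V E Ob"
  assume "(X, Y) \<in> E\<^sup>+"
  then have directed: "(X, Y) \<in> (dedges ?M)\<^sup>*"
    by (intro trancl_into_rtrancl trancl_imp_trancl_mag_of[OF assms(1,3,4)])
  have avoid: "v \<notin> Z" if "(X, v) \<in> (dedges ?M)\<^sup>*" for v
    using rtrancl_mag_of_poss_de[OF assms(1) that] assms(7) by blast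
  obtain A where "msep ?M A Y Z" and "\<exists>p. m_connecting ?M Z p \<and> hd p = A \<and> last p = X"
  proof (cases "cond_indep V E Ob X Y Z")
    case True
    have "\<exists>p. m_connecting ?M Z p \<and> hd p = X \<and> last p = X"
      using assms(3) avoid[of X] unfolding m_connecting_def is_path_def
      by (intro exI[of _ "[X]"]) auto
    then show ?thesis using that[of X] True unfolding cond_indep_def by blast
  next
    case False
    then show ?thesis using that[of S] assms(9) unfolding cond_indep_def msep_def by auto
  qed
  then obtain p where p: "m_connecting ?M Z p" "hd p = A" "last p = X" by blast
  then have "\<exists>q. m_connecting ?M Z q \<and> hd q = hd p \<and> last q = Y"
    using directed avoid by (intro m_connecting_mag_of_extend[OF assms(1) p(1)]) auto
  then obtain q where "m_connecting ?M Z q" "hd q = A" "last q = Y" using p(2) by blast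
  then show False using \<open>msep ?M A Y Z\<close> unfolding msep_def by blast
qed

end
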